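(* Let $\{(Y_i,\tilde Y_i)\}_{i\in\mathbb Z}$ be i.i.d. with law $P_{Y\tilde Y}$, assume $I(Y;\tilde Y)>0$, and let $E_+>0$ be a constant such that for every $m\in\mathbb N_+$ and any i.i.d. pairs $(U_i,V_i)\sim P_Y\otimes P_Y$ one has $\mathbb P[\sum_{i=1}^m\log\lambda(U_i,V_i)>0]\le\exp[-mE_+]$ (such a constant exists). Then for every integer $k\ge1$ and every $t\in\mathbb N_+$, \[ \mathbb P\!\left[\sum_{i=1}^t\log\lambda(Y_{k+i},\tilde Y_i)>0\right]\le2\exp\!\left[-(t-1)\frac{E_+}{2}\right]. \]
   Context: $\mathcal X,\mathcal Y$ finite alphabets; logs base $|\mathcal X|$ and $\exp$ in the same base. Given $P_X$ and a channel $P_{Y\mid X}$: $P_Y$ is the $Y$-marginal of $P_X\otimes P_{Y\mid X}$ (assume $P_Y(y)>0$ for all $y$), $P_{Y\tilde Y}(y,\tilde y):=\sum_xP_X(x)P_{Y\mid X}(y\mid x)P_{Y\mid X}(\tilde y\mid x)$ (note its $\tilde Y$-marginal is also $P_Y$), $\lambda(y,\tilde y):=P_{Y\tilde Y}(y,\tilde y)/(P_Y(y)P_Y(\tilde y))$, and $I(Y;\tilde Y)$ is the mutual information under $P_{Y\tilde Y}$. *)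

theory Defs
  imports "HOL-Probability.Probability"
begin

text \<open>Setting: finite input alphabet 'x, finite output alphabet 'y, input law PX,
  channel W (W x is the law of Y given X = x). Logarithms/exponentials are to base
  card('x).\<close>

definition PY :: "'x pmf \<Rightarrow> ('x \<Rightarrow> 'y pmf) \<Rightarrow> 'y pmf" where
  "PY PX W = bind_pmf PX W"

definition PYY :: "'x pmf \<Rightarrow> ('x \<Rightarrow> 'y pmf) \<Rightarrow> ('y \<times> 'y) pmf" where
  "PYY PX W = bind_pmf PX (\<lambda>x. pair_pmf (W x) (W x))"

definition lam :: "'x pmf \<Rightarrow> ('x \<Rightarrow> 'y pmf) \<Rightarrow> 'y \<Rightarrow> 'y \<Rightarrow> real" where
  "lam PX W y y' = pmf (PYY PX W) (y, y') / (pmf (PY PX W) y * pmf (PY PX W) y')"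

definition logbase :: "'x itself \<Rightarrow> real" where
  "logbase _ = real CARD('x)"

definition loglam :: "'x pmf \<Rightarrow> ('x \<Rightarrow> 'y pmf) \<Rightarrow> 'y \<Rightarrow> 'y \<Rightarrow> ereal" where
  "loglam PX W y y' =
     (if lam PX W y y' = 0 then -\<infinity> else ereal (log (logbase TYPE('x)) (lam PX W y y')))"

definition MI :: "'x pmf \<Rightarrow> ('x \<Rightarrow> 'y pmf) \<Rightarrow> real" where
  "MI PX W = (\<Sum>p\<in>{p. pmf (PYY PX W) p > 0}.
       pmf (PYY PX W) p * log (logbase TYPE('x)) (lam PX W (fst p) (snd p)))"

end

theory Submission
  imports Defs
begin

(* Colour the indices 1..t with two colours so that i and k + i always get different colours
   and so do 2j+1 and 2j+2; each colour class then has at least (t-1)/2 elements. Within one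
   class the summands log lambda(Y_(k+i), Y~_i) read first components and second components at
   pairwise distinct positions of the i.i.d. sequence, so they are i.i.d. with law P_Y x P_Y and
   the hypothesis bounds the probability that the partial sum over the class is positive by
   exp(-(t-1) E+/2). If the whole sum is positive, one of the two partial sums is, and a union
   bound gives the factor 2. *)

lemma map_Pi_pmf_components_at_disjoint_positions:
  fixes Q :: "('a \<times> 'b) pmf" and sa sb :: "'i \<Rightarrow> 'k"
  assumes "finite I" "finite J" "inj_on sa J" "inj_on sb J"
    and "sa ` J \<subseteq> I" "sb ` J \<subseteq> I" "sa ` J \<inter> sb ` J = {}"
  shows "map_pmf (\<lambda>\<omega> j. if j \<in> J then (fst (\<omega> (sa j)), snd (\<omega> (sb j))) else undefined)
           (Pi_pmf I dflt (\<lambda>_. Q))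
       = Pi_pmf J undefined (\<lambda>_. pair_pmf (map_pmf fst Q) (map_pmf snd Q))"
    (is "map_pmf ?F _ = _")
proof (rule pmf_eqI)
  fix x :: "'i \<Rightarrow> 'a \<times> 'b"
  show "pmf (map_pmf ?F (Pi_pmf I dflt (\<lambda>_. Q))) x =
        pmf (Pi_pmf J undefined (\<lambda>_. pair_pmf (map_pmf fst Q) (map_pmf snd Q))) x"
  proof (cases "\<forall>j. j \<notin> J \<longrightarrow> x j = undefined")
    case False
    then have "?F -` {x} = {}" by (auto simp: fun_eq_iff)
    then show ?thesis
      using False assms(2) by (simp add: pmf_map pmf_Pi_outside)
  next
    case True
    define B where "B i = {z. \<forall>j\<in>J. (i = sa j \<longrightarrow> fst z = fst (x j)) \<and> (i = sb j \<longrightarrow> snd z = snd (x j))}"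
      for i
    have B_sa: "B (sa j) = {z. fst z = fst (x j)}" and B_sb: "B (sb j) = {z. snd z = snd (x j)}"
      if "j \<in> J" for j
      using that assms(3,4,7) by (auto simp: B_def inj_on_eq_iff)
    have B_other: "B i = UNIV" if "i \<notin> sa ` J \<union> sb ` J" for i
      using that by (auto simp: B_def)
    have "?F -` {x} = Pi I B"
      using True assms(5,6) by (auto simp: B_def fun_eq_iff prod_eq_iff Pi_iff image_subset_iff) metis+
    then have "pmf (map_pmf ?F (Pi_pmf I dflt (\<lambda>_. Q))) x = (\<Prod>i\<in>I. measure_pmf.prob Q (B i))"
      using assms(1) by (simp add: pmf_map measure_Pi_pmf_Pi)
    also have "\<dots> = (\<Prod>i\<in>sa ` J \<union> sb ` J. measure_pmf.prob Q (B i))"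
      using assms(1,5,6) by (intro prod.mono_neutral_right) (auto simp: B_other)
    also have "\<dots> = (\<Prod>i\<in>sa ` J. measure_pmf.prob Q (B i)) * (\<Prod>i\<in>sb ` J. measure_pmf.prob Q (B i))"
      using assms(2,7) by (intro prod.union_disjoint) auto
    also have "\<dots> = (\<Prod>j\<in>J. pmf (map_pmf fst Q) (fst (x j)) * pmf (map_pmf snd Q) (snd (x j)))"
      using assms(3,4) by (simp add: prod.reindex prod.distrib B_sa B_sb pmf_map vimage_def)
    also have "\<dots> = pmf (Pi_pmf J undefined (\<lambda>_. pair_pmf (map_pmf fst Q) (map_pmf snd Q))) x"
      using assms(2) True by (simp add: pmf_Pi' pmf_pair[symmetric])
    finally show ?thesis .
  qed
qed

lemma prob_shifted_sum_eq_iid: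
  fixes Q :: "('a \<times> 'b) pmf" and L :: "'a \<Rightarrow> 'b \<Rightarrow> 'c :: {comm_monoid_add, ord}"
    and C :: "nat set"
  assumes "finite I" "C \<subseteq> I" "(\<lambda>i. k + i) ` C \<subseteq> I" "\<And>i. i \<in> C \<Longrightarrow> k + i \<notin> C"
  shows "measure_pmf.prob (Pi_pmf I dflt (\<lambda>_. Q))
           {\<omega>. (\<Sum>i\<in>C. L (fst (\<omega> (k + i))) (snd (\<omega> i))) > 0}
       = measure_pmf.prob (Pi_pmf {1..card C} undefined (\<lambda>_. pair_pmf (map_pmf fst Q) (map_pmf snd Q)))
           {\<omega>. (\<Sum>j\<in>{1..card C}. L (fst (\<omega> j)) (snd (\<omega> j))) > 0}"
proof -
  define J where "J = {1..card C}"
  have "finite C" using assms(1,2) by (rule finite_subset[rotated])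
  then obtain g where g: "bij_betw g J C"
    unfolding J_def using ex_bij_betw_nat_finite_1 by blast
  then have g_inj: "inj_on g J" and g_img: "g ` J = C"
    by (auto simp: bij_betw_def)
  define F where "F \<omega> j = (if j \<in> J then (fst (\<omega> (k + g j)), snd (\<omega> (g j))) else undefined)"
    for \<omega> :: "nat \<Rightarrow> 'a \<times> 'b" and j
  have "map_pmf F (Pi_pmf I dflt (\<lambda>_. Q))
      = Pi_pmf J undefined (\<lambda>_. pair_pmf (map_pmf fst Q) (map_pmf snd Q))"
    unfolding F_def
  proof (rule map_Pi_pmf_components_at_disjoint_positions)
    show "inj_on (\<lambda>j. k + g j) J"
      using g_inj by (auto simp: inj_on_def)
    show "(\<lambda>j. k + g j) ` J \<subseteq> I" "g ` J \<subseteq> I"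
      using assms(2,3) g_img by auto
    have "k + g j \<noteq> g j'" if "j \<in> J" "j' \<in> J" for j j'
      using assms(4)[of "g j"] g_img that by blast
    then show "(\<lambda>j. k + g j) ` J \<inter> g ` J = {}"
      by blast
  qed (use assms(1) g_inj J_def in auto)
  moreover have "(\<Sum>j\<in>J. L (fst (F \<omega> j)) (snd (F \<omega> j)))
      = (\<Sum>i\<in>C. L (fst (\<omega> (k + i))) (snd (\<omega> i)))" for \<omega>
    using sum.reindex_bij_betw[OF g, of "\<lambda>i. L (fst (\<omega> (k + i))) (snd (\<omega> i))"]
    by (simp add: F_def)
  then have "F -` {\<omega>. (\<Sum>j\<in>J. L (fst (\<omega> j)) (snd (\<omega> j))) > 0}
      = {\<omega>. (\<Sum>i\<in>C. L (fst (\<omega> (k + i))) (snd (\<omega> i))) > 0}"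
    by simp
  ultimately show ?thesis
    unfolding J_def[symmetric] by (metis measure_map_pmf)
qed

lemma prob_sum_pos_le_split:
  fixes f :: "'a \<Rightarrow> 'i \<Rightarrow> 'c :: {ordered_comm_monoid_add, linorder}"
  assumes "finite A"
  shows "measure_pmf.prob M {\<omega>. (\<Sum>i\<in>A. f \<omega> i) > 0}
      \<le> measure_pmf.prob M {\<omega>. (\<Sum>i\<in>{i\<in>A. P i}. f \<omega> i) > 0}
        + measure_pmf.prob M {\<omega>. (\<Sum>i\<in>{i\<in>A. \<not> P i}. f \<omega> i) > 0}"
proof -
  have sum_split: "(\<Sum>i\<in>A. f \<omega> i) = (\<Sum>i\<in>{i\<in>A. P i}. f \<omega> i) + (\<Sum>i\<in>{i\<in>A. \<not> P i}. f \<omega> i)"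
    for \<omega>
    using assms by (subst sum.union_disjoint[symmetric]) (auto intro!: sum.cong)
  have "(\<Sum>i\<in>{i\<in>A. P i}. f \<omega> i) > 0 \<or> (\<Sum>i\<in>{i\<in>A. \<not> P i}. f \<omega> i) > 0"
    if "(\<Sum>i\<in>A. f \<omega> i) > 0" for \<omega>
  proof (rule ccontr)
    assume "\<not> ?thesis"
    then have "(\<Sum>i\<in>{i\<in>A. P i}. f \<omega> i) + (\<Sum>i\<in>{i\<in>A. \<not> P i}. f \<omega> i) \<le> 0"
      by (intro add_nonpos_nonpos) (simp_all add: not_less)
    with that show False
      unfolding sum_split by simp
  qed
  then have "measure_pmf.prob M {\<omega>. (\<Sum>i\<in>A. f \<omega> i) > 0}
      \<le> measure_pmf.prob M ({\<omega>. (\<Sum>i\<in>{i\<in>A. P i}. f \<omega> i) > 0}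
                              \<union> {\<omega>. (\<Sum>i\<in>{i\<in>A. \<not> P i}. f \<omega> i) > 0})"
    by (intro measure_pmf.finite_measure_mono) auto
  also have "\<dots> \<le> measure_pmf.prob M {\<omega>. (\<Sum>i\<in>{i\<in>A. P i}. f \<omega> i) > 0}
        + measure_pmf.prob M {\<omega>. (\<Sum>i\<in>{i\<in>A. \<not> P i}. f \<omega> i) > 0}"
    by (rule measure_Un_le) simp_all
  finally show ?thesis .
qed

(* For odd k the colour is the parity of n; for even k it is the parity of n plus the index
   n div k of its block of length k. *)
definition shift_coloring :: "nat \<Rightarrow> nat \<Rightarrow> bool" where
  "shift_coloring k n \<longleftrightarrow> odd (n + Suc k * (n div k))"

lemma shift_coloring_add_period: "0 < k \<Longrightarrow> shift_coloring k (n + k) \<longleftrightarrow> \<not> shift_coloring k n"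
proof -
  assume "0 < k"
  then have "(n + k) div k = Suc (n div k)"
    by simp
  then show ?thesis
    by (cases "even k") (simp_all add: shift_coloring_def)
qed

lemma shift_coloring_Suc_even: "shift_coloring k (Suc (2 * j)) \<longleftrightarrow> \<not> shift_coloring k (2 * j)"
proof -
  have "even (Suc k * (Suc (2 * j) div k)) \<longleftrightarrow> even (Suc k * (2 * j div k))"
  proof (cases "even k")
    case True
    then have "\<not> k dvd Suc (2 * j)"
      using dvd_trans[of 2 k "Suc (2 * j)"] by auto
    then have "Suc (2 * j) div k = 2 * j div k"
      by (simp add: div_Suc dvd_eq_mod_eq_0)
    then show ?thesis by simp
  qed simp
  moreover have "odd (Suc (2 * j) + a) \<longleftrightarrow> \<not> odd (2 * j + b)" if "even a \<longleftrightarrow> even b" for a b :: nat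
    using that by simp
  ultimately show ?thesis
    unfolding shift_coloring_def by blast
qed

lemma half_le_card_of_alternating_pairs:
  assumes "\<And>j. P (2 * j + 1) \<noteq> P (2 * j + 2)"
  shows "t div 2 \<le> card {i\<in>{1..t}. P i}"
proof -
  define pick where "pick j = (if P (2 * j + 1) then 2 * j + 1 else 2 * j + 2)" for j
  have "inj_on pick {..<t div 2}"
    by (rule inj_on_inverseI[where g = "\<lambda>i. (i - 1) div 2"]) (simp add: pick_def)
  moreover have "pick ` {..<t div 2} \<subseteq> {i\<in>{1..t}. P i}"
    using assms by (auto simp: pick_def)
  ultimately show ?thesis
    using card_inj_on_le[of pick "{..<t div 2}"] by simp
qed

lemma map_fst_PYY: "map_pmf fst (PYY PX W) = PY PX W"
  by (simp add: PYY_def PY_def map_bind_pmf map_fst_pair_pmf)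

lemma map_snd_PYY: "map_pmf snd (PYY PX W) = PY PX W"
  by (simp add: PYY_def PY_def map_bind_pmf map_snd_pair_pmf)

lemma prob_shifted_loglam_sum_on_class_le:
  fixes PX :: "('x::finite) pmf" and W :: "'x \<Rightarrow> ('y::finite) pmf" and Eplus :: real
    and P :: "nat \<Rightarrow> bool"
  assumes E_bound: "\<And>m::nat. m \<ge> 1 \<Longrightarrow>
        measure_pmf.prob (Pi_pmf {1..m} undefined (\<lambda>_. pair_pmf (PY PX W) (PY PX W)))
          {\<omega>. (\<Sum>i\<in>{1..m}. loglam PX W (fst (\<omega> i)) (snd (\<omega> i))) > 0}
        \<le> logbase TYPE('x) powr (- (real m * Eplus))"
    and E_nonneg: "Eplus \<ge> 0"
    and shift: "\<And>i. i \<ge> 1 \<Longrightarrow> P (i + k) \<noteq> P i"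
    and pairs: "\<And>j. P (2 * j + 1) \<noteq> P (2 * j + 2)"
  shows "measure_pmf.prob (Pi_pmf {1..k+t} undefined (\<lambda>_. PYY PX W))
          {\<omega>. (\<Sum>i\<in>{i\<in>{1..t}. P i}. loglam PX W (fst (\<omega> (k+i))) (snd (\<omega> i))) > 0}
        \<le> logbase TYPE('x) powr (- ((real t - 1) * Eplus / 2))"
proof -
  define C where "C = {i\<in>{1..t}. P i}"
  define m where "m = card C"
  have "measure_pmf.prob (Pi_pmf {1..k+t} undefined (\<lambda>_. PYY PX W))
          {\<omega>. (\<Sum>i\<in>C. loglam PX W (fst (\<omega> (k+i))) (snd (\<omega> i))) > 0}
      = measure_pmf.prob (Pi_pmf {1..m} undefined (\<lambda>_. pair_pmf (PY PX W) (PY PX W)))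
          {\<omega>. (\<Sum>i\<in>{1..m}. loglam PX W (fst (\<omega> i)) (snd (\<omega> i))) > 0}"
  proof -
    have "C \<subseteq> {1..k+t}" "(\<lambda>i. k + i) ` C \<subseteq> {1..k+t}" "\<And>i. i \<in> C \<Longrightarrow> k + i \<notin> C"
      using shift by (auto simp: C_def add.commute)
    from prob_shifted_sum_eq_iid[OF _ this, where Q = "PYY PX W"] show ?thesis
      by (simp add: m_def map_fst_PYY map_snd_PYY)
  qed
  also have "\<dots> \<le> logbase TYPE('x) powr (- ((real t - 1) * Eplus / 2))"
  proof (cases "m = 0")
    case True
    then show ?thesis by simp
  next
    case False
    have "t div 2 \<le> m"
      unfolding m_def C_def using pairs by (rule half_le_card_of_alternating_pairs)
    then have "real t - 1 \<le> 2 * real m"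
      by linarith
    then have "- (real m * Eplus) \<le> - ((real t - 1) * Eplus / 2)"
      using mult_right_mono[OF _ E_nonneg] by fastforce
    moreover have "logbase TYPE('x) \<ge> 1"
      by (simp add: logbase_def Suc_le_eq)
    ultimately have "logbase TYPE('x) powr (- (real m * Eplus))
        \<le> logbase TYPE('x) powr (- ((real t - 1) * Eplus / 2))"
      by (rule powr_mono)
    with False show ?thesis
      using E_bound[of m] by simp
  qed
  finally show ?thesis
    unfolding C_def .
qed

theorem mainTheorem12:
  fixes PX :: "('x::finite) pmf" and W :: "'x \<Rightarrow> ('y::finite) pmf" and Eplus :: real
  assumes PY_pos: "\<And>y. pmf (PY PX W) y > 0"
    and MI_pos: "MI PX W > 0"
    and E_pos: "Eplus > 0"
    and E_bound: "\<And>m::nat. m \<ge> 1 \<Longrightarrow>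
        measure_pmf.prob (Pi_pmf {1..m} undefined (\<lambda>_. pair_pmf (PY PX W) (PY PX W)))
          {\<omega>. (\<Sum>i\<in>{1..m}. loglam PX W (fst (\<omega> i)) (snd (\<omega> i))) > 0}
        \<le> logbase TYPE('x) powr (- (real m * Eplus))"
  shows "\<forall>k::nat. \<forall>t::nat. k \<ge> 1 \<longrightarrow> t \<ge> 1 \<longrightarrow>
        measure_pmf.prob (Pi_pmf {1..k+t} undefined (\<lambda>_. PYY PX W))
          {\<omega>. (\<Sum>i\<in>{1..t}. loglam PX W (fst (\<omega> (k+i))) (snd (\<omega> i))) > 0}
        \<le> 2 * logbase TYPE('x) powr (- ((real t - 1) * Eplus / 2))"
proof (intro allI impI)
  fix k t :: nat
  assume "k \<ge> 1" "t \<ge> 1"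
  let ?M = "Pi_pmf {1..k+t} undefined (\<lambda>_. PYY PX W)"
  let ?S = "\<lambda>A \<omega>. \<Sum>i\<in>A. loglam PX W (fst (\<omega> (k+i))) (snd (\<omega> i))"
  let ?bound = "logbase TYPE('x) powr (- ((real t - 1) * Eplus / 2))"
  let ?c = "\<lambda>i. shift_coloring k (i - 1)"
  have period: "?c (i + k) \<longleftrightarrow> \<not> ?c i" if "i \<ge> 1" for i
    using shift_coloring_add_period[of k "i - 1"] \<open>k \<ge> 1\<close> that by simp
  have pair: "?c (2 * j + 2) \<longleftrightarrow> \<not> ?c (2 * j + 1)" for j
    using shift_coloring_Suc_even[of k j] by simp
  have "measure_pmf.prob ?M {\<omega>. ?S {1..t} \<omega> > 0}
      \<le> measure_pmf.prob ?M {\<omega>. ?S {i\<in>{1..t}. ?c i} \<omega> > 0}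
        + measure_pmf.prob ?M {\<omega>. ?S {i\<in>{1..t}. \<not> ?c i} \<omega> > 0}"
    by (rule prob_sum_pos_le_split) simp
  also have "\<dots> \<le> ?bound + ?bound"
    using E_pos period pair
    by (intro add_mono prob_shifted_loglam_sum_on_class_le[OF E_bound]) auto
  finally show "measure_pmf.prob ?M {\<omega>. ?S {1..t} \<omega> > 0} \<le> 2 * ?bound"
    by simp
qed

end
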